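(* Let $m$ be a positive integer with $3\mid 2^m+1$, $n=2m$, let $s$ be an integer with $\gcd(s,2^m+1)=1$, and let $a=\overline{a}\xi^k\in\mathbb{F}_{2^n}^*$ with $\overline{a}\in\mathbb{F}_{2^m}$ and $0\le k\le 2^m$. Define $f:\mathbb{F}_{2^n}\to\mathbb{F}_2$ by $f(0)=0$ and $$f(x)=\sum_{i=1}^{\frac{2^m+1}{3}-1}{\rm Tr}_1^n\big(ax^{(3i+s)(2^m-1)}\big).$$ Then $f$ is bent if and only if $$K_m(\overline{a})=3-\sum_{j=0}^{2}(-1)^{{\rm Tr}_1^n(a\xi^{j\frac{2^m+1}{3}})}.$$ Furthermore, if $f$ is bent, then $K_m(\overline{a})=0$ when ${\rm Tr}_1^n(a)={\rm Tr}_1^n(a\xi^{\frac{2^m+1}{3}})={\rm Tr}_1^n(a\xi^{2\frac{2^m+1}{3}})=0$, and $K_m(\overline{a})=4$ otherwise.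
   Context: ${\rm Tr}_k^t$ is the trace map from $\mathbb{F}_{2^t}$ to $\mathbb{F}_{2^k}$. $\xi$ is a fixed generator of the cyclic group $U=\{x\in\mathbb{F}_{2^n}:x^{2^m+1}=1\}$. $K_m(\beta)=\sum_{x\in\mathbb{F}_{2^m}}(-1)^{{\rm Tr}_1^m(\beta x+x^{2^m-2})}$. A function $f:\mathbb{F}_{2^n}\to\mathbb{F}_2$ is bent if $|W_f(\lambda)|^2=2^n$ for all $\lambda$, where $W_f(\lambda)=\sum_{x}(-1)^{f(x)+{\rm Tr}_1^n(\lambda x)}$. *)

theory Defs
  imports Main
begin

definition tr :: "nat \<Rightarrow> 'a::field \<Rightarrow> 'a" where
  "tr k x = (\<Sum>i<k. x ^ (2 ^ i))"

text \<open>(-1)^y for y in F_2 = {0,1} inside the field.\<close>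
definition chi :: "'a::field \<Rightarrow> int" where
  "chi y = (if y = 0 then 1 else -1)"

definition subF :: "nat \<Rightarrow> 'a::field set" where
  "subF m = {x. x ^ (2 ^ m) = x}"

definition unitU :: "nat \<Rightarrow> 'a::field set" where
  "unitU m = {x. x ^ (2 ^ m + 1) = 1}"

definition kloost :: "nat \<Rightarrow> 'a::field \<Rightarrow> int" where
  "kloost m \<beta> = (\<Sum>x\<in>subF m. chi (tr m (\<beta> * x + x ^ (2 ^ m - 2))))"

text \<open>Walsh transform and bentness over F_{2^n}; f takes values in {0,1} of the field.\<close>
definition walsh :: "nat \<Rightarrow> ('a::{field,finite} \<Rightarrow> 'a) \<Rightarrow> 'a \<Rightarrow> int" where
  "walsh n f l = (\<Sum>x\<in>UNIV. chi (f x + tr n (l * x)))"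

definition bent :: "nat \<Rightarrow> ('a::{field,finite} \<Rightarrow> 'a) \<Rightarrow> bool" where
  "bent n f \<longleftrightarrow> (\<forall>l. (walsh n f l)\<^sup>2 = 2 ^ n)"

end

theory Submission
  imports Defs "HOL-Computational_Algebra.Polynomial"
begin

text \<open>Write \<open>q = 2^m\<close>, so the ambient field is \<open>F_{q^2}\<close>. Every function of the form
  \<open>f x = g (x^(q-1))\<close> (with \<open>f 0 = 0\<close>) has Walsh transform \<open>1 + (q - 1) S\<close> at \<open>0\<close> and
  \<open>1 - S \<plusminus> q\<close> elsewhere, where \<open>S = \<Sum>v\<in>U. (-1)^g(v)\<close>; hence \<open>f\<close> is bent iff \<open>S = 1\<close>.
  For the given exponents \<open>g v = Tr(a v^s)\<close>, except on the three cube roots of unity in \<open>U\<close>,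
  where \<open>g = 0\<close>. Since \<open>s\<close> is prime to \<open>q + 1\<close>, reindexing by \<open>v \<mapsto> v^s\<close> expresses \<open>S\<close>
  through \<open>\<Sum>u\<in>U. (-1)^Tr(a u)\<close> and the three traces \<open>Tr(a \<xi>^(jN))\<close>, \<open>N = (q+1)/3\<close>. A count
  of the roots of \<open>x^2 + t x + a^(q+1)\<close> in \<open>F_q\<close> and in \<open>a U\<close> shows that the sum over \<open>U\<close>
  equals \<open>1 - K_m(a^(q+1)) = 1 - K_m(abar)\<close>. Finally the three traces add up to \<open>0\<close>, so
  either all vanish or exactly two of them are \<open>1\<close>.\<close>

definition kloost_nz :: "nat \<Rightarrow> 'a::field \<Rightarrow> int" where
  "kloost_nz m \<beta> = (\<Sum>y\<in>subF m - {0}. chi (tr m (\<beta> * y + inverse y)))"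

lemma tr_zero [simp]: "tr k (0::'a::field) = 0"
  by (auto simp: tr_def intro!: sum.neutral)

section \<open>Root counts\<close>

lemma card_roots_le:
  fixes p :: "'a::field poly"
  assumes "p \<noteq> 0" "degree p \<le> d" "\<And>x. P x \<Longrightarrow> poly p x = 0"
  shows "card {x. P x} \<le> d"
proof -
  have "card {x. P x} \<le> card {x. poly p x = 0}"
    by (rule card_mono) (use assms(3) poly_roots_finite[OF assms(1)] in auto)
  also have "\<dots> \<le> degree p" by (rule card_poly_roots_bound[OF assms(1)])
  finally show ?thesis using assms(2) by simp
qed

lemma card_fixed_points_power_le:
  assumes "d \<ge> 2" shows "card {x::'a::field. x^d = x} \<le> d"
proof (rule card_roots_le[where p = "monom 1 d - monom 1 1"])
  have "coeff (monom (1::'a) d - monom 1 1) d = 1" using assms by (simp add: coeff_monom)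
  thus "monom (1::'a) d - monom 1 1 \<noteq> 0" by (metis coeff_0 one_neq_zero)
  show "degree (monom (1::'a) d - monom 1 1) \<le> d"
    by (rule order.trans[OF degree_diff_le_max]) (use assms in \<open>auto simp: degree_monom_eq\<close>)
  show "poly (monom 1 d - monom 1 1) x = 0" if "x^d = x" for x :: 'a
    using that by (simp add: poly_monom)
qed

lemma card_power_eq_le:
  assumes "d \<ge> 1" shows "card {x::'a::field. x^d = c} \<le> d"
proof (rule card_roots_le[where p = "monom 1 d - [:c:]"])
  have "coeff (monom (1::'a) d - [:c:]) d = 1"
    using assms by (simp add: coeff_monom coeff_pCons split: nat.split)
  thus "monom (1::'a) d - [:c:] \<noteq> 0" by (metis coeff_0 one_neq_zero)
  show "degree (monom (1::'a) d - [:c:]) \<le> d"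
    by (rule order.trans[OF degree_diff_le_max]) (use assms degree_monom_le in auto)
  show "poly (monom 1 d - [:c:]) x = 0" if "x^d = c" for x :: 'a
    using that by (simp add: poly_monom)
qed

lemma card_quadratic_roots_le: "card {x::'a::field. x^2 + t*x + c = 0} \<le> 2"
proof (rule card_roots_le[where p = "[:c, t, 1:]"])
  show "poly [:c, t, 1:] x = 0" if "x^2 + t*x + c = 0" for x :: 'a
    using that by (simp add: algebra_simps power2_eq_square)
qed simp_all

lemma card_tr_eq_le:
  assumes "k \<ge> 1" shows "card {x::'a::field \<in> S. tr k x = c} \<le> 2^(k-1)"
proof (rule card_roots_le[where p = "(\<Sum>i<k. monom 1 (2^i)) - [:c:]"])
  have "coeff ((\<Sum>i<k. monom (1::'a) (2^i)) - [:c:]) (2^(k-1)) = (\<Sum>i<k. if i = k-1 then 1 else 0)"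
    by (simp add: coeff_sum coeff_monom coeff_pCons split: nat.split)
  also have "\<dots> = 1" using assms by simp
  finally show "(\<Sum>i<k. monom (1::'a) (2^i)) - [:c:] \<noteq> 0" by (metis coeff_0 one_neq_zero)
  have "degree (\<Sum>i<k. monom (1::'a) (2^i)) \<le> 2^(k-1)"
  proof (rule degree_sum_le)
    fix i assume "i \<in> {..<k}"
    hence "(2::nat)^i \<le> 2^(k-1)" by (intro power_increasing) auto
    thus "degree (monom (1::'a) (2^i)) \<le> 2^(k-1)" using degree_monom_le order.trans by blast
  qed simp
  thus "degree ((\<Sum>i<k. monom (1::'a) (2^i)) - [:c:]) \<le> 2^(k-1)"
    using degree_diff_le_max[of "\<Sum>i<k. monom (1::'a) (2^i)" "[:c:]"] by simp
  show "poly ((\<Sum>i<k. monom 1 (2^i)) - [:c:]) x = 0" if "x \<in> S \<and> tr k x = c" for x :: 'a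
    using that by (simp add: poly_sum poly_monom tr_def)
qed

lemma mult_le_mult_imp_eq:
  fixes a b A B :: nat
  assumes "a \<le> A" "b \<le> B" "A * B \<le> a * b" "0 < A" "0 < B"
  shows "a = A \<and> b = B"
proof -
  have "a * b \<le> a * B" "a * B \<le> A * B" using assms(1,2) by simp_all
  hence "a * B = A * B" "a * b = a * B" using assms(3) by linarith+
  hence "a = A" using assms(5) by simp
  thus ?thesis using \<open>a * b = a * B\<close> assms(4) by simp
qed

lemma eq_const_if_sum_eq_card_times:
  fixes f :: "'b \<Rightarrow> nat"
  assumes "finite T" "\<And>t. t \<in> T \<Longrightarrow> f t \<le> c" "(\<Sum>t\<in>T. f t) = card T * c" "t \<in> T"
  shows "f t = c"
proof (rule ccontr)
  assume "f t \<noteq> c"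
  hence "(\<Sum>t\<in>T. f t) < (\<Sum>t\<in>T. c)"
    using assms by (intro sum_strict_mono_ex1) (auto intro: le_neq_implies_less)
  thus False using assms(3) by simp
qed

lemma sum_comp_eq_sum_card_fibres:
  assumes "finite T" "g ` A \<subseteq> T" "finite A"
  shows "(\<Sum>x\<in>A. h (g x)) = (\<Sum>t\<in>T. of_nat (card {x\<in>A. g x = t}) * h t)"
proof -
  have "(\<Sum>x\<in>A. h (g x)) = (\<Sum>t\<in>T. \<Sum>x\<in>{x\<in>A. g x = t}. h (g x))"
    by (rule sum.group[symmetric]) (use assms in auto)
  also have "\<dots> = (\<Sum>t\<in>T. of_nat (card {x\<in>A. g x = t}) * h t)"
    by (rule sum.cong) simp_all
  finally show ?thesis .
qed

lemma power_int_power_int_cancel: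
  fixes v :: "'a::field" and s \<alpha> \<beta> :: int
  assumes "v^d = 1" "d > 0" "s * \<alpha> + int d * \<beta> = 1"
  shows "(v powi s) powi \<alpha> = v"
proof -
  have "v \<noteq> 0" using assms(1,2) by (auto simp: zero_power)
  have "s * \<alpha> = 1 + int d * (- \<beta>)" using assms(3) by simp
  hence "(v powi s) powi \<alpha> = v powi (1 + int d * (- \<beta>))"
    by (simp add: power_int_mult[symmetric])
  also have "\<dots> = v powi 1 * v powi (int d * (- \<beta>))"
    using \<open>v \<noteq> 0\<close> by (rule power_int_add[OF disjI1])
  also have "v powi (int d * (- \<beta>)) = (v powi (int d)) powi (- \<beta>)" by (rule power_int_mult)
  finally show ?thesis using assms(1) by simp
qed

lemma power_int_root_of_unity:
  assumes "(v::'a::field)^d = 1" shows "(v powi e)^d = 1"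
proof -
  have "(v powi e)^d = v powi (e * int d)" by (rule power_int_power')
  also have "\<dots> = (v^d) powi e" by (simp add: power_int_power mult.commute)
  finally have "(v powi e)^d = (v^d) powi e" .
  thus ?thesis using assms by simp
qed

lemma sum_power_int_coprime_reindex:
  fixes A :: "'a::field set" and s :: int
  assumes "coprime s (int d)" "d > 0"
    and "\<And>v. v \<in> A \<Longrightarrow> v^d = 1" and "\<And>v e. v \<in> A \<Longrightarrow> v powi e \<in> A"
  shows "(\<Sum>v\<in>A. h (v powi s)) = (\<Sum>v\<in>A. h v)"
proof -
  obtain \<alpha> \<beta> where "\<alpha> * s + \<beta> * int d = 1"
    using bezout_int[of s "int d"] assms(1) by auto
  hence "s * \<alpha> + int d * \<beta> = 1" "\<alpha> * s + int d * \<beta> = 1" by (simp_all add: algebra_simps)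
  thus ?thesis
    by (intro sum.reindex_bij_witness[where i="\<lambda>v. v powi \<alpha>" and j="\<lambda>v. v powi s"])
       (auto intro: assms(4) power_int_power_int_cancel[OF assms(3) \<open>d > 0\<close>])
qed

section \<open>Finite fields of characteristic two\<close>

lemma power_card_UNIV_minus_1:
  assumes "(x::'a::{field,finite}) \<noteq> 0" shows "x ^ (card (UNIV :: 'a set) - 1) = 1"
proof -
  let ?B = "UNIV - {0::'a}"
  have "(\<Prod>y\<in>?B. x * y) = (\<Prod>y\<in>?B. y)"
    by (rule prod.reindex_bij_witness[of _ "\<lambda>y. y / x" "\<lambda>y. x * y"]) (use assms in auto)
  hence "x ^ card ?B * (\<Prod>y\<in>?B. y) = (\<Prod>y\<in>?B. y)" by (simp add: prod.distrib)
  hence "x ^ card ?B = 1" by simp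
  thus ?thesis by (simp add: card_Diff_singleton)
qed

lemma power_card_UNIV: "(x::'a::{field,finite}) ^ card (UNIV :: 'a set) = x"
proof -
  have "card (UNIV :: 'a set) = Suc (card (UNIV :: 'a set) - 1)"
    using finite_UNIV_card_ge_0[where 'a='a] by simp
  hence "x ^ card (UNIV :: 'a set) = x ^ (card (UNIV :: 'a set) - 1) * x" by (metis power_Suc2)
  thus ?thesis using power_card_UNIV_minus_1[of x] by (cases "x = 0") simp_all
qed

lemma two_eq_zero_if_card_UNIV:
  assumes "card (UNIV :: 'a::{field,finite} set) = 2 ^ n"
  shows "(2::'a) = 0"
proof -
  have "(\<Sum>x::'a\<in>UNIV. x + 1) = (\<Sum>x\<in>UNIV. x)"
    by (rule sum.reindex_bij_witness[of _ "\<lambda>x. x - 1" "\<lambda>x. x + 1"]) auto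
  hence "(of_nat (card (UNIV::'a set)) :: 'a) = 0" by (simp add: sum.distrib)
  hence "(2::'a) ^ n = 0" using assms by simp
  thus ?thesis by simp
qed

locale char_two_field =
  fixes TY :: "'a::field itself"
  assumes two_eq_zero: "(2::'a) = 0"
begin

lemma add_self [simp]: "(x::'a) + x = 0"
  using two_eq_zero by (simp flip: mult_2)

lemma add_eq_0_iff_eq: "(x::'a) + y = 0 \<longleftrightarrow> x = y"
  by (metis add_self add_left_cancel)

lemma power2_add: "((x::'a) + y)^2 = x^2 + y^2"
  by (simp add: power2_sum two_eq_zero)

lemma power2_inj: "(x::'a)^2 = y^2 \<Longrightarrow> x = y"
  using power2_add[of x y] by (simp add: add_eq_0_iff_eq)

lemma power_two_power_add: "((x::'a) + y)^(2^i) = x^(2^i) + y^(2^i)"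
proof (induction i)
  case (Suc i)
  have "(x + y)^(2^Suc i) = ((x + y)^(2^i))^2" by (simp add: power_mult[symmetric] mult.commute)
  also have "\<dots> = x^(2^Suc i) + y^(2^Suc i)"
    by (simp add: Suc power2_add power_mult[symmetric] mult.commute)
  finally show ?case .
qed simp

lemma power_two_power_sum: "(sum f A :: 'a)^(2^i) = (\<Sum>j\<in>A. (f j)^(2^i))"
  by (induction A rule: infinite_finite_induct) (simp_all add: power_two_power_add)

lemma tr_add: "tr k ((x::'a) + y) = tr k x + tr k y"
  by (simp add: tr_def power_two_power_add sum.distrib)

lemma tr_sum: "tr k (sum f A :: 'a) = (\<Sum>j\<in>A. tr k (f j))"
  by (induction A rule: infinite_finite_induct) (simp_all add: tr_add)

lemma tr_power2:
  assumes "(x::'a)^(2^k) = x" shows "tr k (x^2) = tr k x"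
proof -
  have "tr k (x^2) + x^(2^0) = (\<Sum>i<Suc k. x^(2^i))"
    unfolding tr_def sum.lessThan_Suc_shift by (simp add: power_mult[symmetric] mult.commute)
  also have "\<dots> = tr k x + x^(2^k)" by (simp add: tr_def)
  finally show ?thesis using assms by simp
qed

lemma tr_in_01:
  assumes "(x::'a)^(2^k) = x" shows "tr k x = 0 \<or> tr k x = 1"
proof -
  have "(tr k x)^(2^1) = tr k (x^2)"
    unfolding tr_def power_two_power_sum by (simp add: power_mult[symmetric] mult.commute)
  hence "(tr k x)^2 = tr k x" using tr_power2[OF assms] by simp
  thus ?thesis by (metis mult_cancel_left2 power2_eq_square)
qed

lemma chi_add: "y = 0 \<or> y = 1 \<Longrightarrow> z = 0 \<or> z = (1::'a) \<Longrightarrow> chi (y + z) = chi y * chi z"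
  by (auto simp: chi_def)

lemma sum_chi_tr_eq_0:
  assumes "finite S" "card S = 2^k" "k \<ge> 1" "\<And>z. z \<in> S \<Longrightarrow> (z::'a)^(2^k) = z"
  shows "(\<Sum>z\<in>S. chi (tr k z)) = 0"
proof -
  define A0 where "A0 = {z\<in>S. tr k z = 0}"
  define A1 where "A1 = {z\<in>S. tr k z = 1}"
  have S: "S = A0 \<union> A1" using assms(4) tr_in_01 unfolding A0_def A1_def by blast
  have disj: "A0 \<inter> A1 = {}" unfolding A0_def A1_def by auto
  have fin: "finite A0" "finite A1" using assms(1) unfolding A0_def A1_def by auto
  have "card A0 \<le> 2^(k-1)" "card A1 \<le> 2^(k-1)"
    unfolding A0_def A1_def by (rule card_tr_eq_le[OF assms(3)])+
  moreover have "card A0 + card A1 = 2^k" using card_Un_disjoint[OF fin disj] S assms(2) by simp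
  moreover have "(2::nat)^k = 2 * 2^(k-1)" using assms(3) by (metis Suc_diff_le diff_Suc_1 power_Suc)
  ultimately have "card A0 = card A1" by linarith
  have "(\<Sum>z\<in>S. chi (tr k z)) = (\<Sum>z\<in>A0. chi (tr k z)) + (\<Sum>z\<in>A1. chi (tr k z))"
    using sum.union_disjoint[OF fin disj] S by simp
  also have "\<dots> = int (card A0) - int (card A1)" by (simp add: A0_def A1_def chi_def)
  finally show ?thesis using \<open>card A0 = card A1\<close> by simp
qed

lemma sum_powers_root_of_unity:
  assumes "(w::'a)^N = 1" "odd N"
  shows "(\<Sum>i=1..N-1. w^i) = (if w = 1 then 0 else 1)"
proof (cases "w = 1")
  case True
  obtain k where "N = 2 * k + 1" using assms(2) by (rule oddE)
  hence "N - 1 = 2 * k" by simp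
  have "(\<Sum>i=1..N-1. w^i) = of_nat (N - 1)" using True by simp
  also have "\<dots> = 2 * of_nat k" using \<open>N - 1 = 2 * k\<close> by simp
  also have "\<dots> = 0" by (simp add: two_eq_zero)
  finally show ?thesis using True by simp
next
  case False
  have "Suc (N-1) = N" using assms(2) by (cases N) simp_all
  have "(\<Sum>i=1..N-1. w^i) = (\<Sum>i<N-1. w^Suc i)"
    by (simp only: One_nat_def sum.atLeast1_atMost_eq)
  hence "1 + (\<Sum>i=1..N-1. w^i) = (\<Sum>i<Suc (N-1). w^i)"
    by (simp only: sum.lessThan_Suc_shift power_0)
  also have "\<dots> = (\<Sum>i<N. w^i)" using \<open>Suc (N-1) = N\<close> by simp
  also have "\<dots> = 0" using geometric_sum[OF False, of N] assms(1) by simp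
  finally show ?thesis using False by (simp add: add_eq_0_iff_eq)
qed

lemma sum_tr_cube_roots:
  assumes "(w::'a)^3 = 1" "w \<noteq> 1"
  shows "tr k a + tr k (a*w) + tr k (a*w^2) = 0"
proof -
  have "(w - 1) * (w^2 + w + 1) = w^3 - 1"
    by (simp add: algebra_simps power2_eq_square power3_eq_cube two_eq_zero)
  hence "(w - 1) * (w^2 + w + 1) = 0" using assms(1) by simp
  hence "w^2 + w + 1 = 0" using assms(2) by simp
  moreover have "tr k a + tr k (a*w) + tr k (a*w^2) = tr k (a * (w^2 + w + 1))"
    by (simp add: tr_add algebra_simps)
  ultimately show ?thesis by simp
qed

end

section \<open>The field of order \<open>2^(2m)\<close>\<close>

locale gf_quadratic =
  fixes m :: nat and TY :: "'a::{field,finite} itself"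
  assumes m_pos: "m > 0" and card_UNIV: "card (UNIV :: 'a set) = 2 ^ (2*m)"
begin

sublocale char_two_field TY
  by unfold_locales (rule two_eq_zero_if_card_UNIV[OF card_UNIV])

abbreviation q :: nat where "q \<equiv> 2 ^ m"
abbreviation Fq :: "'a set" where "Fq \<equiv> subF m"
abbreviation Fq_nz :: "'a set" where "Fq_nz \<equiv> subF m - {0}"
abbreviation U :: "'a set" where "U \<equiv> unitU m"

lemma q_ge_2: "q \<ge> 2"
  using power_increasing[of 1 m "2::nat"] m_pos by simp

lemma q_minus_1_times_q_plus_1: "(q - 1) * (q + 1) = q * q - 1"
  using q_ge_2 by (simp add: algebra_simps diff_mult_distrib)

lemma card_UNIV_eq: "card (UNIV :: 'a set) = q * q"
  by (simp add: card_UNIV power_mult power2_eq_square mult.commute)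

lemma power_card_minus_1: "(x::'a) \<noteq> 0 \<Longrightarrow> x ^ (q * q - 1) = 1"
  using power_card_UNIV_minus_1 card_UNIV_eq by metis

lemma power_card: "(x::'a) ^ (q * q) = x"
  using power_card_UNIV card_UNIV_eq by metis

lemma tr_in_01_ambient: "tr (2*m) (x::'a) = 0 \<or> tr (2*m) x = 1"
  by (rule tr_in_01) (metis card_UNIV power_card_UNIV)

lemma tr_double: "tr (2*m) (w::'a) = tr m (w + w^q)"
proof -
  have split: "(\<Sum>i<m+b. g i) = (\<Sum>i<m. g i) + (\<Sum>i<b. g (m+i))" for g :: "nat \<Rightarrow> 'a" and b
    by (induct b) (simp_all add: add.assoc)
  have "tr (2*m) w = tr m w + (\<Sum>i<m. w^(2^(m+i)))"
    unfolding tr_def mult_2 split ..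
  also have "(\<Sum>i<m. w^(2^(m+i))) = tr m (w^q)"
    by (simp add: tr_def power_add power_mult)
  finally show ?thesis by (simp add: tr_add)
qed

lemma mem_Fq_iff: "x \<in> Fq \<longleftrightarrow> (x::'a)^q = x"
  by (simp add: subF_def)

lemma Fq_add: "x \<in> Fq \<Longrightarrow> y \<in> Fq \<Longrightarrow> (x::'a) + y \<in> Fq"
  by (simp add: mem_Fq_iff power_two_power_add)

lemma Fq_mult: "x \<in> Fq \<Longrightarrow> y \<in> Fq \<Longrightarrow> (x::'a) * y \<in> Fq"
  by (simp add: mem_Fq_iff power_mult_distrib)

lemma Fq_inverse: "x \<in> Fq \<Longrightarrow> inverse (x::'a) \<in> Fq"
  by (simp add: mem_Fq_iff power_inverse)

lemma Fq_power: "x \<in> Fq \<Longrightarrow> (x::'a)^k \<in> Fq"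
  by (simp add: mem_Fq_iff) (metis power_mult mult.commute)

lemma power_q: "(x::'a)^q = x^(q-1) * x"
  using q_ge_2 by (simp add: power_Suc2[symmetric])

lemma mem_Fq_nz_iff: "y \<in> Fq_nz \<longleftrightarrow> (y::'a) \<noteq> 0 \<and> y^(q-1) = 1"
  by (auto simp: mem_Fq_iff power_q mult_cancel_right2)

lemma mem_U_iff: "v \<in> U \<longleftrightarrow> (v::'a)^(q+1) = 1"
  by (simp add: unitU_def)

lemma U_nonzero: "v \<in> U \<Longrightarrow> (v::'a) \<noteq> 0"
  by (auto simp: mem_U_iff)

lemma power_q_eq_inverse:
  assumes "u \<in> U" shows "(u::'a)^q = inverse u"
proof -
  have "u^q * u = 1" using assms by (simp add: mem_U_iff power_Suc2[symmetric])
  thus ?thesis by (metis inverse_unique mult.commute)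
qed

lemma power_q_minus_1_in_U:
  assumes "(x::'a) \<noteq> 0" shows "x^(q-1) \<in> U"
proof -
  from q_minus_1_times_q_plus_1
  have "(x^(q-1))^(q+1) = x^(q * q - 1)" by (simp only: power_mult[symmetric])
  thus ?thesis using power_card_minus_1[OF assms] by (simp add: mem_U_iff)
qed

definition pow_fibre :: "'a \<Rightarrow> 'a set" where
  "pow_fibre v = {x. x \<noteq> 0 \<and> x^(q-1) = v}"

lemma pow_fibre_eq_image:
  assumes "x0 \<in> pow_fibre v" shows "pow_fibre v = (\<lambda>y. x0 * y) ` Fq_nz"
proof
  have x0: "x0 \<noteq> 0" "x0^(q-1) = v" using assms by (auto simp: pow_fibre_def)
  show "pow_fibre v \<subseteq> (\<lambda>y. x0 * y) ` Fq_nz"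
  proof
    fix x assume "x \<in> pow_fibre v"
    hence "x / x0 \<in> Fq_nz"
      using x0 by (intro mem_Fq_nz_iff[THEN iffD2]) (auto simp: pow_fibre_def power_divide)
    moreover have "x = x0 * (x / x0)" using x0 by simp
    ultimately show "x \<in> (\<lambda>y. x0 * y) ` Fq_nz" by blast
  qed
  show "(\<lambda>y. x0 * y) ` Fq_nz \<subseteq> pow_fibre v"
  proof
    fix x assume "x \<in> (\<lambda>y. x0 * y) ` Fq_nz"
    then obtain y where "x = x0 * y" "y \<noteq> 0" "y^(q-1) = 1" using mem_Fq_nz_iff by blast
    thus "x \<in> pow_fibre v" using x0 by (simp add: pow_fibre_def power_mult_distrib)
  qed
qed

lemma card_pow_fibre_le: "card (pow_fibre v) \<le> card Fq_nz"
proof (cases "pow_fibre v = {}")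
  case False
  then obtain x0 where "x0 \<in> pow_fibre v" by auto
  hence "pow_fibre v = (\<lambda>y. x0 * y) ` Fq_nz" by (rule pow_fibre_eq_image)
  thus ?thesis by (simp add: card_image_le)
qed simp

lemma sum_card_pow_fibre: "(\<Sum>v\<in>U. card (pow_fibre v)) = q * q - 1"
proof -
  have "(\<lambda>x. x^(q-1)) ` (UNIV - {0}) \<subseteq> U" using power_q_minus_1_in_U by blast
  from sum_comp_eq_sum_card_fibres[OF _ this, of "\<lambda>_. 1::nat"]
  have "(\<Sum>v\<in>U. card (pow_fibre v)) = card (UNIV - {0::'a})"
    by (simp add: pow_fibre_def conj_commute)
  thus ?thesis using card_UNIV_eq by (simp add: card_Diff_singleton)
qed

text \<open>Both counts are bounded by polynomial root counts; the fibres of \<open>x \<mapsto> x^(q-1)\<close>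
  over \<open>U\<close> then force equality.\<close>
lemma card_Fq_nz_and_U: "card Fq_nz = q - 1 \<and> card U = q + 1"
proof (rule mult_le_mult_imp_eq)
  show "card Fq_nz \<le> q - 1"
    using card_fixed_points_power_le[where 'a='a, OF q_ge_2] by (simp add: subF_def card_Diff_singleton)
  show "card U \<le> q + 1"
    using card_power_eq_le[where 'a='a, of "q+1" 1] by (simp add: unitU_def)
  have "(q - 1) * (q + 1) = q * q - 1" by (rule q_minus_1_times_q_plus_1)
  also have "\<dots> \<le> card U * card Fq_nz"
    using sum_mono[of U "\<lambda>v. card (pow_fibre v)" "\<lambda>_. card Fq_nz", OF card_pow_fibre_le]
    by (simp add: sum_card_pow_fibre)
  finally show "(q - 1) * (q + 1) \<le> card Fq_nz * card U" by (simp add: mult.commute)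
qed (use q_ge_2 in simp_all)

lemma card_Fq_nz: "card Fq_nz = q - 1"
  using card_Fq_nz_and_U by simp

lemma card_U: "card U = q + 1"
  using card_Fq_nz_and_U by simp

lemma card_Fq: "card Fq = q"
  using card_Fq_nz q_ge_2 by (simp add: card_Diff_singleton subF_def)

lemma card_pow_fibre:
  assumes "v \<in> U" shows "card (pow_fibre v) = q - 1"
proof (rule eq_const_if_sum_eq_card_times[where T=U])
  show "card (pow_fibre v) \<le> q - 1" for v using card_pow_fibre_le[of v] card_Fq_nz by simp
  show "(\<Sum>v\<in>U. card (pow_fibre v)) = card U * (q - 1)"
    by (simp only: sum_card_pow_fibre card_U mult.commute[of "q+1"] q_minus_1_times_q_plus_1)
qed (use assms in simp_all)

lemma pow_fibre_eq_image_ex: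
  assumes "v \<in> U" obtains x0 where "x0 \<in> pow_fibre v" "pow_fibre v = (\<lambda>y. x0 * y) ` Fq_nz"
proof -
  have "pow_fibre v \<noteq> {}"
  proof
    assume "pow_fibre v = {}"
    thus False using card_pow_fibre[OF assms] q_ge_2 by simp
  qed
  thus ?thesis using pow_fibre_eq_image that by blast
qed

section \<open>Walsh spectrum of functions of \<open>x^(q-1)\<close>\<close>

lemma sum_chi_tr_Fq_nz:
  "(\<Sum>y\<in>Fq_nz. chi (tr (2*m) ((z::'a)*y))) = (if z + z^q = 0 then int q - 1 else -1)"
proof -
  define w where "w = z + z^q"
  have tr_eq: "tr (2*m) (z*y) = tr m (y * w)" if "y \<in> Fq_nz" for y
  proof -
    have "y^q = y" using that by (simp add: mem_Fq_iff)
    hence "z*y + (z*y)^q = y * w" by (simp add: w_def power_mult_distrib algebra_simps)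
    thus ?thesis by (simp add: tr_double)
  qed
  have "w \<in> Fq" unfolding mem_Fq_iff w_def
    by (simp add: power_two_power_add power_mult[symmetric] power_card add.commute)
  show ?thesis
  proof (cases "w = 0")
    case True
    hence "(\<Sum>y\<in>Fq_nz. chi (tr (2*m) (z*y))) = (\<Sum>y\<in>Fq_nz. 1)" by (simp add: tr_eq chi_def)
    also have "\<dots> = int q - 1" using card_Fq_nz q_ge_2 by (simp add: of_nat_diff)
    finally show ?thesis using True w_def by simp
  next
    case False
    have "(\<Sum>y\<in>Fq_nz. chi (tr (2*m) (z*y))) = (\<Sum>y\<in>Fq_nz. chi (tr m (y * w)))" by (simp add: tr_eq)
    also have "\<dots> = (\<Sum>y\<in>Fq. chi (tr m (y * w))) - chi (tr m (0 * w))"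
      by (subst sum_diff1) (auto simp: mem_Fq_iff)
    also have "(\<Sum>y\<in>Fq. chi (tr m (y * w))) = (\<Sum>u\<in>Fq. chi (tr m u))"
      by (rule sum.reindex_bij_witness[where i="\<lambda>u. u / w" and j="\<lambda>y. y * w"])
         (use False \<open>w \<in> Fq\<close> in \<open>auto simp: Fq_mult Fq_inverse divide_inverse\<close>)
    also have "\<dots> = 0"
      by (rule sum_chi_tr_eq_0) (use card_Fq m_pos in \<open>auto simp: mem_Fq_iff\<close>)
    finally show ?thesis using False w_def by (simp add: chi_def)
  qed
qed

lemma sum_chi_tr_pow_fibre:
  assumes "v \<in> U"
  shows "(\<Sum>x\<in>pow_fibre v. chi (tr (2*m) (l * x))) =
         (if l = 0 \<or> v = inverse (l^(q-1)) then int q - 1 else -1)"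
proof -
  obtain x0 where x0: "x0 \<in> pow_fibre v" and fibre: "pow_fibre v = (\<lambda>y. x0 * y) ` Fq_nz"
    using pow_fibre_eq_image_ex[OF assms] .
  have x0': "x0 \<noteq> 0" "x0^(q-1) = v" using x0 by (auto simp: pow_fibre_def)
  have "inj_on (\<lambda>y. x0 * y) Fq_nz" using x0' by (auto simp: inj_on_def)
  hence "(\<Sum>x\<in>pow_fibre v. chi (tr (2*m) (l * x))) = (\<Sum>y\<in>Fq_nz. chi (tr (2*m) ((l * x0) * y)))"
    unfolding fibre by (simp add: sum.reindex mult.assoc)
  also have "\<dots> = (if l * x0 + (l * x0)^q = 0 then int q - 1 else -1)"
    by (rule sum_chi_tr_Fq_nz)
  also have "l * x0 + (l * x0)^q = 0 \<longleftrightarrow> l = 0 \<or> v = inverse (l^(q-1))"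
  proof (cases "l = 0")
    case False
    have "l * x0 + (l * x0)^q = 0 \<longleftrightarrow> (l * x0)^(q-1) * (l * x0) = 1 * (l * x0)"
      by (auto simp: add_eq_0_iff_eq power_q[of "l * x0"])
    also have "\<dots> \<longleftrightarrow> l^(q-1) * v = 1"
      using False x0' by (simp add: power_mult_distrib)
    also have "\<dots> \<longleftrightarrow> v = inverse (l^(q-1))" using False by (auto simp: field_simps)
    finally show ?thesis using False by simp
  qed simp
  finally show ?thesis .
qed

text \<open>The functions of this shape are exactly those vanishing at \<open>0\<close> and constant on the cosets
  of \<open>Fq_nz\<close>.\<close>
lemma walsh_compose_power:
  assumes G01: "\<And>v. G v = 0 \<or> G v = 1"
  defines "S \<equiv> \<Sum>v\<in>U. chi (G v)"
  shows "walsh (2*m) (\<lambda>x. if x = 0 then 0 else G (x^(q-1))) l =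
           (if l = 0 then 1 + (int q - 1) * S
            else 1 - S + int q * chi (G (inverse (l^(q-1)))))"
proof -
  let ?F = "\<lambda>x. if x = 0 then 0 else G (x^(q-1))"
  let ?c = "\<lambda>v. if l = 0 \<or> v = inverse (l^(q-1)) then int q - 1 else -1"
  have "walsh (2*m) ?F l = (\<Sum>x\<in>UNIV. chi (?F x) * chi (tr (2*m) (l * x)))"
    unfolding walsh_def by (rule sum.cong) (simp_all add: chi_add G01 tr_in_01_ambient)
  also have "\<dots> = 1 + (\<Sum>x\<in>UNIV - {0}. chi (G (x^(q-1))) * chi (tr (2*m) (l * x)))"
    by (subst sum.remove[of UNIV 0]) (simp_all add: chi_def)
  also have "(\<Sum>x\<in>UNIV - {0}. chi (G (x^(q-1))) * chi (tr (2*m) (l * x))) =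
     (\<Sum>v\<in>U. \<Sum>x\<in>{x\<in>UNIV - {0}. x^(q-1) = v}. chi (G (x^(q-1))) * chi (tr (2*m) (l * x)))"
    by (rule sum.group[symmetric]) (use power_q_minus_1_in_U in auto)
  also have "\<dots> = (\<Sum>v\<in>U. chi (G v) * (\<Sum>x\<in>pow_fibre v. chi (tr (2*m) (l * x))))"
    by (rule sum.cong) (auto simp: sum_distrib_left pow_fibre_def intro!: sum.cong)
  also have "\<dots> = (\<Sum>v\<in>U. chi (G v) * ?c v)"
    by (rule sum.cong) (simp_all add: sum_chi_tr_pow_fibre)
  finally have W: "walsh (2*m) ?F l = 1 + (\<Sum>v\<in>U. chi (G v) * ?c v)" .
  show ?thesis
  proof (cases "l = 0")
    case True thus ?thesis using W by (simp add: S_def sum_distrib_right[symmetric])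
  next
    case False
    define vl where "vl = inverse (l^(q-1))"
    have "vl \<in> U" unfolding vl_def using power_q_minus_1_in_U[of "inverse l"] False
      by (simp add: power_inverse)
    have "(\<Sum>v\<in>U. chi (G v) * ?c v) = (\<Sum>v\<in>U. - chi (G v) + (if v = vl then int q * chi (G v) else 0))"
      by (rule sum.cong) (auto simp: False vl_def algebra_simps)
    also have "\<dots> = - S + int q * chi (G vl)"
      by (simp only: sum.distrib sum_negf S_def) (simp add: \<open>vl \<in> U\<close>)
    finally show ?thesis using W False by (simp add: vl_def)
  qed
qed

lemma one_add_mult_neq_neg:
  fixes Q S :: int
  assumes "Q \<ge> 2" "even Q" "S \<ge> 1 - Q"
  shows "1 + (Q - 1) * S \<noteq> - Q"
proof
  assume neg: "1 + (Q - 1) * S = - Q"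
  consider "S \<ge> 0" | "S = -1" | "S \<le> -2" by linarith
  thus False
  proof cases
    case 1
    hence "(Q - 1) * S \<ge> 0" using assms(1) by simp
    thus False using neg assms(1) by linarith
  next
    case 2
    thus False using neg by simp
  next
    case 3
    hence "(Q - 1) * S \<le> (Q - 1) * (-2)" using assms(1) by (intro mult_left_mono) auto
    hence "Q = 2" using neg assms(1,2) by presburger
    thus False using neg assms(3) by simp
  qed
qed

lemma bent_iff_sum_chi_eq_1:
  assumes G01: "\<And>v. G v = 0 \<or> G v = 1" and "v0 \<in> U" "G v0 = 0"
  shows "bent (2*m) (\<lambda>x. if x = 0 then 0 else G (x^(q-1))) \<longleftrightarrow> (\<Sum>v\<in>U. chi (G v)) = 1"
    (is "bent _ ?F \<longleftrightarrow> ?S = 1")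
proof -
  note W = walsh_compose_power[where G=G, OF G01]
  have Q: "(2::int)^(2*m) = int q * int q" by (simp add: power_mult power2_eq_square mult.commute)
  have "int q \<ge> 2" using q_ge_2 by linarith
  show ?thesis
  proof
    assume "bent (2*m) ?F"
    hence "(walsh (2*m) ?F 0)^2 = 2^(2*m)" unfolding bent_def by blast
    hence "(1 + (int q - 1) * ?S)^2 = (int q)^2" using W[where l=0] Q by (simp add: power2_eq_square)
    hence "1 + (int q - 1) * ?S = int q \<or> 1 + (int q - 1) * ?S = - int q" by (simp add: power2_eq_iff)
    thus "?S = 1"
    proof
      assume "1 + (int q - 1) * ?S = int q"
      hence "(int q - 1) * (?S - 1) = 0" by (simp add: algebra_simps)
      thus "?S = 1" using m_pos by simp
    next
      assume neg: "1 + (int q - 1) * ?S = - int q"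
      text \<open>The term at \<open>v0\<close> keeps \<open>?S\<close> away from \<open>-(q+1)\<close>, the value that would make
        \<open>?F\<close> bent for \<open>q = 2\<close>.\<close>
      have "?S = chi (G v0) + (\<Sum>v\<in>U - {v0}. chi (G v))"
        using \<open>v0 \<in> U\<close> by (simp add: sum.remove)
      moreover have "(\<Sum>v\<in>U - {v0}. chi (G v)) \<ge> - int q"
        using sum_bounded_below[where A="U - {v0}" and K="-1" and f="\<lambda>v. chi (G v)"] card_U \<open>v0 \<in> U\<close>
        by (simp add: chi_def card_Diff_singleton)
      ultimately have "?S \<ge> 1 - int q" using \<open>G v0 = 0\<close> by (simp add: chi_def)
      moreover have "even (int q)" using m_pos by simp
      ultimately show "?S = 1" using one_add_mult_neq_neg[of "int q" ?S] neg \<open>int q \<ge> 2\<close> by blast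
    qed
  next
    assume "?S = 1"
    show "bent (2*m) ?F"
      unfolding bent_def
    proof
      fix l
      have "chi y * chi y = 1" for y :: 'a by (simp add: chi_def)
      thus "(walsh (2*m) ?F l)^2 = 2^(2*m)"
        using W[where l=l] \<open>?S = 1\<close> Q by (simp add: power2_eq_square algebra_simps)
    qed
  qed
qed

section \<open>Kloosterman sums\<close>

text \<open>For \<open>m = 1\<close> the exponent \<open>2^m - 2\<close> in \<open>kloost\<close> is \<open>0\<close>, so the term at \<open>x = 0\<close>
  is \<open>chi (tr 1 1) = -1\<close> instead of \<open>chi 0 = 1\<close>.\<close>
lemma kloost_eq_kloost_nz:
  assumes "b \<in> Fq"
  shows "kloost m b = kloost_nz m b + (if m = 1 then -1 else 1)"
proof -
  have "kloost m b = chi (tr m (0^(q-2) :: 'a)) + (\<Sum>x\<in>Fq_nz. chi (tr m (b * x + x^(q-2))))"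
    unfolding kloost_def by (subst sum.remove[of Fq 0]) (auto simp: mem_Fq_iff)
  also have "(\<Sum>x\<in>Fq_nz. chi (tr m (b * x + x^(q-2)))) = kloost_nz m b"
    unfolding kloost_nz_def
  proof (rule sum.cong)
    fix x assume "x \<in> Fq_nz"
    hence "x^(q-1) = 1" using mem_Fq_nz_iff by blast
    moreover have "q - 1 = Suc (q - 2)" using q_ge_2 by simp
    ultimately have "x^(q-2) * x = 1" by (simp only: power_Suc2)
    hence "x^(q-2) = inverse x" by (metis inverse_unique mult.commute)
    thus "chi (tr m (b * x + x^(q-2))) = chi (tr m (b * x + inverse x))" by simp
  qed simp
  also have "chi (tr m (0^(q-2) :: 'a)) = (if m = 1 then -1 else 1)"
  proof (cases "m = 1")
    case False
    hence "q - 2 > 0" using m_pos power_strict_increasing[of 1 m "2::nat"] by simp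
    hence "(0::'a)^(q-2) = 0" by (rule zero_power)
    thus ?thesis using False by (simp only: tr_zero) (simp add: chi_def)
  qed (simp add: tr_def chi_def)
  finally show ?thesis by simp
qed

lemma kloost_nz_power2:
  assumes "b \<in> Fq" shows "kloost_nz m (b^2) = kloost_nz m b"
proof -
  have "inj_on (\<lambda>z. z^2) Fq_nz" by (auto simp: inj_on_def intro: power2_inj)
  moreover have "(\<lambda>z. z^2) ` Fq_nz \<subseteq> Fq_nz" by (auto intro: Fq_power)
  ultimately have squares: "(\<lambda>z. z^2) ` Fq_nz = Fq_nz" by (simp add: endo_inj_surj)
  have "kloost_nz m (b^2) = (\<Sum>z\<in>Fq_nz. chi (tr m (b^2 * z^2 + inverse (z^2))))"
    unfolding kloost_nz_def by (subst (1) squares[symmetric]) (simp add: sum.reindex[OF \<open>inj_on _ _\<close>])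
  also have "\<dots> = kloost_nz m b"
    unfolding kloost_nz_def
  proof (rule sum.cong)
    fix z assume "z \<in> Fq_nz"
    hence "b * z + inverse z \<in> Fq" using assms by (auto intro!: Fq_add Fq_mult Fq_inverse)
    moreover have "b^2 * z^2 + inverse (z^2) = (b * z + inverse z)^2"
      by (simp add: power2_add power_mult_distrib power_inverse)
    ultimately show "chi (tr m (b^2 * z^2 + inverse (z^2))) = chi (tr m (b * z + inverse z))"
      by (simp add: mem_Fq_iff tr_power2)
  qed simp
  finally show ?thesis .
qed

lemma power_q_plus_1_in_Fq: "(x::'a)^(q+1) \<in> Fq"
proof -
  have "(x^(q+1))^q = x^(q*q) * x^q" by (simp add: power_mult[symmetric] power_add[symmetric] algebra_simps)
  also have "\<dots> = x^(q+1)" by (simp add: power_card mult.commute)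
  finally show ?thesis by (simp add: mem_Fq_iff)
qed

lemma add_power_q_inverse_in_Fq:
  assumes "u \<in> U" shows "a*u + a^q * inverse u \<in> Fq"
proof -
  have "(a*u + a^q * inverse u)^q = a^q * u^q + a^(q*q) * inverse (u^q)"
    by (simp add: power_two_power_add power_mult_distrib power_inverse power_mult[symmetric])
  also have "\<dots> = a*u + a^q * inverse u"
    using assms by (simp add: power_q_eq_inverse power_card add.commute)
  finally show ?thesis by (simp add: mem_Fq_iff)
qed

lemma add_mult_inverse_eq_0_if_norm_eq:
  assumes "x \<in> Fq_nz" "x^(q+1) = c" shows "x + c * inverse x = 0"
proof -
  have "x^(q+1) = x * x" using assms(1) by (simp add: mem_Fq_iff)
  thus ?thesis using assms by (simp add: field_simps)
qed

lemma kloosterman_fibres_subset_roots: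
  shows "{x\<in>Fq_nz. x + a^(q+1) * inverse x = t} \<subseteq> {x. x^2 + t*x + a^(q+1) = 0}"
    and "(\<lambda>u. a*u) ` {u\<in>U. a*u + a^q * inverse u = t} \<subseteq> {x. x^2 + t*x + a^(q+1) = 0}"
proof -
  show "{x\<in>Fq_nz. x + a^(q+1) * inverse x = t} \<subseteq> {x. x^2 + t*x + a^(q+1) = 0}"
  proof
    fix x assume "x \<in> {x\<in>Fq_nz. x + a^(q+1) * inverse x = t}"
    hence "t * x = x^2 + a^(q+1)" by (auto simp: field_simps power2_eq_square)
    thus "x \<in> {x. x^2 + t*x + a^(q+1) = 0}" by (simp add: two_eq_zero)
  qed
  show "(\<lambda>u. a*u) ` {u\<in>U. a*u + a^q * inverse u = t} \<subseteq> {x. x^2 + t*x + a^(q+1) = 0}"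
  proof
    fix x assume "x \<in> (\<lambda>u. a*u) ` {u\<in>U. a*u + a^q * inverse u = t}"
    then obtain u where u: "x = a*u" "u \<in> U" "a*u + a^q * inverse u = t" by auto
    hence "t * u = a * (u * u) + a^q" using U_nonzero[OF u(2)] by (auto simp: field_simps)
    hence "t * x = x^2 + a^(q+1)" using u(1) by (simp add: algebra_simps power2_eq_square)
    thus "x \<in> {x. x^2 + t*x + a^(q+1) = 0}" by (simp add: two_eq_zero)
  qed
qed

context
  fixes a :: 'a
  assumes a_nz: "a \<noteq> 0"
begin

text \<open>Both fibres consist of roots of \<open>x^2 + t x + a^(q+1)\<close>: those in \<open>Fq_nz\<close>, and \<open>a\<close> times
  those in \<open>U\<close>, i.e.\ the roots \<open>x\<close> with \<open>x^(q+1) = a^(q+1)\<close>.\<close>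
lemma card_kloosterman_fibres_le_2:
  "card {x\<in>Fq_nz. x + a^(q+1) * inverse x = t} + card {u\<in>U. a*u + a^q * inverse u = t} \<le> 2"
proof -
  define X1 where "X1 = {x\<in>Fq_nz. x + a^(q+1) * inverse x = t}"
  define X2 where "X2 = (\<lambda>u. a*u) ` {u\<in>U. a*u + a^q * inverse u = t}"
  define R where "R = {x. x^2 + t*x + a^(q+1) = 0}"
  have "X1 \<subseteq> R" "X2 \<subseteq> R" unfolding X1_def X2_def R_def by (rule kloosterman_fibres_subset_roots)+
  have "card X2 = card {u\<in>U. a*u + a^q * inverse u = t}"
    unfolding X2_def using a_nz by (simp add: card_image inj_on_def)
  moreover have "card X1 + card X2 \<le> 2"
  proof (cases "t = 0")
    case True
    have "\<forall>x\<in>R. \<forall>y\<in>R. x = y" using True by (auto simp: R_def add_eq_0_iff_eq intro: power2_inj)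
    hence "card R \<le> 1" using card_le_Suc0_iff_eq[OF finite, of R] by simp
    thus ?thesis using card_mono[OF finite \<open>X1 \<subseteq> R\<close>] card_mono[OF finite \<open>X2 \<subseteq> R\<close>] by linarith
  next
    case False
    have "X1 \<inter> X2 = {}"
    proof (safe, simp)
      fix x assume "x \<in> X1" "x \<in> X2"
      hence "x \<in> Fq_nz" "x^(q+1) = a^(q+1)"
        by (auto simp: X1_def X2_def power_mult_distrib mem_U_iff)
      hence "x + a^(q+1) * inverse x = 0" by (rule add_mult_inverse_eq_0_if_norm_eq)
      thus False using \<open>x \<in> X1\<close> False by (simp add: X1_def)
    qed
    hence "card X1 + card X2 = card (X1 \<union> X2)" by (simp add: card_Un_disjoint)
    also have "\<dots> \<le> card R" using \<open>X1 \<subseteq> R\<close> \<open>X2 \<subseteq> R\<close> by (intro card_mono) auto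
    also have "\<dots> \<le> 2" unfolding R_def by (rule card_quadratic_roots_le)
    finally show ?thesis .
  qed
  ultimately show ?thesis by (simp add: X1_def)
qed

lemma card_kloosterman_fibres_eq_2:
  assumes "t \<in> Fq"
  shows "card {x\<in>Fq_nz. x + a^(q+1) * inverse x = t} + card {u\<in>U. a*u + a^q * inverse u = t} = 2"
proof (rule eq_const_if_sum_eq_card_times[OF finite card_kloosterman_fibres_le_2 _ assms])
  have "(\<lambda>x. x + a^(q+1) * inverse x) ` Fq_nz \<subseteq> Fq"
    by (intro image_subsetI Fq_add Fq_mult Fq_inverse power_q_plus_1_in_Fq) auto
  from sum_comp_eq_sum_card_fibres[OF finite this finite, of "\<lambda>_. 1::nat"]
  have "(\<Sum>t\<in>Fq. card {x\<in>Fq_nz. x + a^(q+1) * inverse x = t}) = q - 1" by (simp add: card_Fq_nz)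
  moreover have "(\<lambda>u. a*u + a^q * inverse u) ` U \<subseteq> Fq"
    using add_power_q_inverse_in_Fq by blast
  from sum_comp_eq_sum_card_fibres[OF finite this finite, of "\<lambda>_. 1::nat"]
  have "(\<Sum>t\<in>Fq. card {u\<in>U. a*u + a^q * inverse u = t}) = q + 1" by (simp add: card_U)
  ultimately show "(\<Sum>t\<in>Fq. card {x\<in>Fq_nz. x + a^(q+1) * inverse x = t}
                          + card {u\<in>U. a*u + a^q * inverse u = t}) = card Fq * 2"
    using q_ge_2 by (simp add: sum.distrib card_Fq)
qed

text \<open>Grouping both sums by the value \<open>t \<in> Fq\<close> of the argument of \<open>tr m\<close>, the fibre counts add
  up to \<open>2\<close>, so the two sums add up to \<open>2 * (\<Sum>t\<in>Fq. chi (tr m t)) = 0\<close>.\<close>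
lemma sum_chi_tr_U_eq_kloost_nz:
  "(\<Sum>u\<in>U. chi (tr (2*m) (a*u))) = - kloost_nz m (a^(q+1))"
proof -
  let ?R = "\<lambda>x. x + a^(q+1) * inverse x" and ?T = "\<lambda>u. a*u + a^q * inverse u"
  let ?N1 = "\<lambda>t. card {x\<in>Fq_nz. ?R x = t}" and ?N2 = "\<lambda>t. card {u\<in>U. ?T u = t}"
  have "?R ` Fq_nz \<subseteq> Fq" by (intro image_subsetI Fq_add Fq_mult Fq_inverse power_q_plus_1_in_Fq) auto
  hence N1: "(\<Sum>x\<in>Fq_nz. chi (tr m (?R x))) = (\<Sum>t\<in>Fq. int (?N1 t) * chi (tr m t))"
    by (rule sum_comp_eq_sum_card_fibres[OF finite _ finite])
  have "?T ` U \<subseteq> Fq" using add_power_q_inverse_in_Fq by blast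
  hence N2: "(\<Sum>u\<in>U. chi (tr m (?T u))) = (\<Sum>t\<in>Fq. int (?N2 t) * chi (tr m t))"
    by (rule sum_comp_eq_sum_card_fibres[OF finite _ finite])
  have "(\<Sum>u\<in>U. chi (tr m (?T u))) + (\<Sum>x\<in>Fq_nz. chi (tr m (?R x))) = (\<Sum>t\<in>Fq. 2 * chi (tr m t))"
    unfolding N1 N2 sum.distrib[symmetric]
  proof (rule sum.cong)
    fix t assume "t \<in> Fq"
    hence "int (?N2 t) + int (?N1 t) = 2" using card_kloosterman_fibres_eq_2 by fastforce
    thus "int (?N2 t) * chi (tr m t) + int (?N1 t) * chi (tr m t) = 2 * chi (tr m t)"
      by (simp flip: distrib_right)
  qed simp
  also have "\<dots> = 2 * (\<Sum>t\<in>Fq. chi (tr m t))" by (simp add: sum_distrib_left)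
  also have "(\<Sum>t\<in>Fq. chi (tr m t)) = 0"
    by (rule sum_chi_tr_eq_0) (use card_Fq m_pos in \<open>auto simp: mem_Fq_iff\<close>)
  finally have "(\<Sum>u\<in>U. chi (tr m (?T u))) = - (\<Sum>x\<in>Fq_nz. chi (tr m (?R x)))" by simp
  moreover have "(\<Sum>u\<in>U. chi (tr (2*m) (a*u))) = (\<Sum>u\<in>U. chi (tr m (?T u)))"
    by (intro sum.cong) (simp_all add: tr_double power_mult_distrib power_q_eq_inverse)
  moreover have "(\<Sum>x\<in>Fq_nz. chi (tr m (?R x))) = kloost_nz m (a^(q+1))"
    unfolding kloost_nz_def
    by (rule sum.reindex_bij_witness[of _ inverse inverse]) (auto simp: Fq_inverse add.commute)
  ultimately show ?thesis by simp
qed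

end

section \<open>Cube roots of unity in the unit circle\<close>

lemma inj_on_generator_powers:
  assumes gen: "range (\<lambda>j::nat. \<xi>^j) = U"
  shows "inj_on (\<lambda>j. \<xi>^j) {..<q+1}"
proof (rule eq_card_imp_inj_on[OF finite_lessThan])
  have "\<xi> \<in> U" using gen by (metis rangeI power_one_right)
  hence "\<xi>^(q+1) = 1" by (simp only: mem_U_iff)
  have reduce: "\<xi>^j = \<xi>^(j mod (q+1))" for j
  proof -
    have "\<xi>^j = (\<xi>^(q+1))^(j div (q+1)) * \<xi>^(j mod (q+1))"
      by (metis div_mult_mod_eq power_add power_mult mult.commute)
    thus ?thesis using \<open>\<xi>^(q+1) = 1\<close> by simp
  qed
  have "(\<lambda>j. \<xi>^j) ` {..<q+1} = U"
  proof
    show "U \<subseteq> (\<lambda>j. \<xi>^j) ` {..<q+1}"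
    proof
      fix v assume "v \<in> U"
      then obtain j where "v = \<xi>^(j mod (q+1))" using gen reduce by (metis rangeE)
      thus "v \<in> (\<lambda>j. \<xi>^j) ` {..<q+1}" by simp
    qed
  qed (use gen in auto)
  thus "card ((\<lambda>j. \<xi>^j) ` {..<q+1}) = card {..<q+1}" using card_U by simp
qed

lemma cube_roots_of_unity_in_U:
  assumes gen: "range (\<lambda>j::nat. \<xi>^j) = U" and N: "q + 1 = 3 * N"
  shows "{v\<in>U. v^3 = 1} = (\<lambda>j. \<xi>^(j*N)) ` {..2}" and "inj_on (\<lambda>j. \<xi>^(j*N)) {..2}"
proof -
  have "\<xi> \<in> U" using gen by (metis rangeI power_one_right)
  hence "\<xi>^(q+1) = 1" by (simp only: mem_U_iff)
  show inj: "inj_on (\<lambda>j. \<xi>^(j*N)) {..2}"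
  proof (rule inj_onI)
    fix i j :: nat assume "i \<in> {..2}" "j \<in> {..2}" "\<xi>^(i*N) = \<xi>^(j*N)"
    moreover have "i * N < q + 1" "j * N < q + 1" using \<open>i \<in> _\<close> \<open>j \<in> _\<close> N by auto
    ultimately have "i * N = j * N" using inj_on_generator_powers[OF gen] by (auto dest: inj_onD)
    thus "i = j" using N by simp
  qed
  have cube: "(\<xi>^(j*N))^3 = 1" for j
  proof -
    have "j * N * 3 = (q+1) * j" using N by simp
    hence "(\<xi>^(j*N))^3 = (\<xi>^(q+1))^j" by (simp only: power_mult[symmetric])
    thus ?thesis using \<open>\<xi>^(q+1) = 1\<close> by simp
  qed
  have "(\<lambda>j. \<xi>^(j*N)) ` {..2} \<subseteq> {v\<in>U. v^3 = 1}" using gen cube by auto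
  moreover have "card {v\<in>U. v^3 = 1} \<le> card ((\<lambda>j. \<xi>^(j*N)) ` {..2})"
  proof -
    have "card {v\<in>U. v^3 = 1} \<le> card {x::'a. x^3 = 1}" by (rule card_mono) auto
    also have "\<dots> \<le> 3" by (rule card_power_eq_le) simp
    finally show ?thesis using card_image[OF inj] by simp
  qed
  ultimately show "{v\<in>U. v^3 = 1} = (\<lambda>j. \<xi>^(j*N)) ` {..2}" by (intro card_seteq[symmetric]) auto
qed

end

section \<open>The Niho-type function\<close>

locale niho_setting = gf_quadratic m TY for m and TY :: "'a::{field,finite} itself" +
  fixes a abar \<xi> :: 'a and s :: int and k :: nat
  assumes three_dvd: "3 dvd q + 1"
    and xi_in_U: "\<xi> \<in> U" and generator: "range (\<lambda>j::nat. \<xi>^j) = U"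
    and gcd_s: "gcd s (2^m + 1) = 1"
    and a_nz: "a \<noteq> 0" and abar_in_Fq: "abar \<in> Fq" and a_eq: "a = abar * \<xi>^k"
begin

definition N :: nat where "N = (q + 1) div 3"

definition g :: "'a \<Rightarrow> 'a" where
  "g v = (\<Sum>i = 1..N - 1. tr (2*m) (a * v powi (3 * int i + s)))"

definition cube_trace_sum :: int where
  "cube_trace_sum = (\<Sum>j\<le>2. chi (tr (2*m) (a * \<xi>^(j*N))))"

lemma q_plus_1_eq: "q + 1 = 3 * N"
  using three_dvd by (simp add: N_def)

lemma f_eq_g:
  "(if x = 0 then 0 else \<Sum>i = 1..(2^m + 1) div 3 - 1. tr (2*m) (a * x powi ((3 * int i + s) * (2^m - 1))))
     = (if x = 0 then 0 else g (x^(q-1)))"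
proof -
  have "x powi ((3 * int i + s) * (2^m - 1)) = (x^(q-1)) powi (3 * int i + s)" for i
  proof -
    have "(3 * int i + s) * (2^m - 1) = int (q - 1) * (3 * int i + s)"
      by (simp add: of_nat_diff mult.commute)
    thus ?thesis by (simp only: power_int_mult power_int_of_nat)
  qed
  thus ?thesis by (simp add: g_def N_def)
qed

lemma g_eq:
  assumes "v \<in> U" shows "g v = (if v^3 = 1 then 0 else tr (2*m) (a * v powi s))"
proof -
  have "v \<noteq> 0" using assms by (rule U_nonzero)
  have "v powi (3 * int i + s) = v powi s * (v^3)^i" for i
  proof -
    have "v powi (3 * int i + s) = v powi (int (3 * i)) * v powi s"
      using \<open>v \<noteq> 0\<close> by (simp add: power_int_add)
    thus ?thesis by (simp only: power_int_of_nat power_mult mult.commute[of "(v^3)^i"])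
  qed
  hence g: "g v = tr (2*m) (a * v powi s * (\<Sum>i = 1..N - 1. (v^3)^i))"
    by (simp add: g_def tr_sum sum_distrib_left mult.assoc)
  have "(v^3)^N = 1"
    using assms unfolding mem_U_iff q_plus_1_eq by (simp only: power_mult)
  moreover have "odd (q + 1)" using m_pos by simp
  hence "odd N" unfolding q_plus_1_eq by simp
  ultimately have "(\<Sum>i = 1..N - 1. (v^3)^i) = (if v^3 = 1 then 0 else 1)"
    by (rule sum_powers_root_of_unity)
  thus ?thesis unfolding g by simp
qed

lemma g_in_01: "g v = 0 \<or> g v = 1"
  using tr_in_01_ambient by (simp add: g_def flip: tr_sum)

lemma cube_roots_U: "{v\<in>U. v^3 = 1} = (\<lambda>j. \<xi>^(j*N)) ` {..2}" "inj_on (\<lambda>j. \<xi>^(j*N)) {..2}"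
  using cube_roots_of_unity_in_U[OF generator q_plus_1_eq] by blast+

lemma a_power_q_plus_1: "a^(q+1) = abar^2"
proof -
  have "abar^(q+1) = abar^2" using abar_in_Fq by (simp add: mem_Fq_iff power2_eq_square)
  moreover have "(\<xi>^k)^(q+1) = (\<xi>^(q+1))^k" by (simp only: power_mult[symmetric] mult.commute)
  hence "(\<xi>^k)^(q+1) = 1" using xi_in_U by (simp add: mem_U_iff)
  moreover have "a^(q+1) = abar^(q+1) * (\<xi>^k)^(q+1)" by (simp only: a_eq power_mult_distrib)
  ultimately show ?thesis by simp
qed

lemma sum_chi_g: "(\<Sum>v\<in>U. chi (g v)) = 3 - kloost_nz m abar - cube_trace_sum"
proof -
  let ?C = "{v\<in>U. v^3 = 1}" and ?h = "\<lambda>u. chi (tr (2*m) (a*u))"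
  have cop: "coprime s (int (q + 1))" using gcd_s by (simp add: coprime_iff_gcd_eq_1 add.commute)
  have "(\<Sum>v\<in>U. ?h (v powi s)) = (\<Sum>v\<in>U. ?h v)" "(\<Sum>v\<in>?C. ?h (v powi s)) = (\<Sum>v\<in>?C. ?h v)"
    by (rule sum_power_int_coprime_reindex[OF cop],
        auto simp only: mem_U_iff mem_Collect_eq intro: power_int_root_of_unity)+
  note reindex = this
  have "(\<Sum>v\<in>U. chi (g v)) = (\<Sum>v\<in>U. ?h (v powi s) + (if v^3 = 1 then 1 - ?h (v powi s) else 0))"
    by (rule sum.cong) (auto simp: g_eq chi_def)
  also have "\<dots> = (\<Sum>v\<in>U. ?h (v powi s)) + (\<Sum>v\<in>?C. 1 - ?h (v powi s))"
    by (simp add: sum.distrib sum.inter_filter)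
  also have "\<dots> = (\<Sum>v\<in>U. ?h v) + card ?C - (\<Sum>v\<in>?C. ?h v)"
    by (simp add: sum_subtractf reindex)
  also have "(\<Sum>v\<in>U. ?h v) = - kloost_nz m abar"
    using sum_chi_tr_U_eq_kloost_nz[OF a_nz] a_power_q_plus_1 kloost_nz_power2[OF abar_in_Fq] by simp
  also have "card ?C = 3" using cube_roots_U by (simp add: card_image)
  also have "(\<Sum>v\<in>?C. ?h v) = cube_trace_sum"
    unfolding cube_roots_U(1) cube_trace_sum_def by (simp add: sum.reindex[OF cube_roots_U(2)])
  finally show ?thesis by simp
qed

lemma bent_iff_kloost:
  "bent (2*m) (\<lambda>x. if x = 0 then 0 else g (x^(q-1))) \<longleftrightarrow> kloost m abar = 3 - cube_trace_sum"
proof -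
  have "g 1 = 0" by (simp add: g_eq mem_U_iff)
  hence "bent (2*m) (\<lambda>x. if x = 0 then 0 else g (x^(q-1))) \<longleftrightarrow> (\<Sum>v\<in>U. chi (g v)) = 1"
    by (intro bent_iff_sum_chi_eq_1 g_in_01) (simp_all add: mem_U_iff)
  also have "\<dots> \<longleftrightarrow> kloost m abar = 3 - cube_trace_sum"
  proof (cases "m = 1")
    case True
    text \<open>Here \<open>N = 1\<close>, so \<open>g = 0\<close> and neither side holds.\<close>
    hence "N = 1" using q_plus_1_eq by simp
    hence "g v = 0" for v by (simp add: g_def)
    hence "(\<Sum>v\<in>U. chi (g v)) = 3" using card_U \<open>m = 1\<close> by (simp add: chi_def)
    thus ?thesis using sum_chi_g kloost_eq_kloost_nz[OF abar_in_Fq] True by simp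
  qed (auto simp: sum_chi_g kloost_eq_kloost_nz[OF abar_in_Fq])
  finally show ?thesis .
qed

lemma kloost_values:
  assumes "kloost m abar = 3 - cube_trace_sum"
  shows "kloost m abar =
           (if tr (2*m) a = 0 \<and> tr (2*m) (a * \<xi>^N) = 0 \<and> tr (2*m) (a * \<xi>^(2*N)) = 0 then 0 else 4)"
proof -
  have "\<xi>^(1*N) \<in> (\<lambda>j. \<xi>^(j*N)) ` {..2}" by (rule imageI) simp
  hence "\<xi>^N \<in> {v\<in>U. v^3 = 1}" unfolding cube_roots_U(1) by simp
  moreover have "\<xi>^N \<noteq> 1"
  proof
    assume "\<xi>^N = 1"
    hence "\<xi>^(1*N) = \<xi>^(0*N)" by simp
    thus False using inj_onD[OF cube_roots_U(2)] by fastforce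
  qed
  ultimately have "tr (2*m) a + tr (2*m) (a * \<xi>^N) + tr (2*m) (a * \<xi>^(2*N)) = 0"
    using sum_tr_cube_roots[of "\<xi>^N"] by (simp add: power_mult mult.commute)
  moreover have "cube_trace_sum = chi (tr (2*m) a) + chi (tr (2*m) (a * \<xi>^N)) + chi (tr (2*m) (a * \<xi>^(2*N)))"
    by (simp add: cube_trace_sum_def numeral_2_eq_2 mult.commute)
  ultimately show ?thesis
    using assms tr_in_01_ambient[of a] tr_in_01_ambient[of "a * \<xi>^N"] tr_in_01_ambient[of "a * \<xi>^(2*N)"]
    by (auto simp: chi_def two_eq_zero)
qed

end

theorem corollary5:
  fixes m n k :: nat and s :: int and a abar \<xi> :: "'a::{field,finite}"
  assumes "m > 0" and "3 dvd (2 ^ m + 1 :: nat)" and "n = 2 * m"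
    and "card (UNIV :: 'a set) = 2 ^ n"
    and "\<xi> \<in> unitU m" and "range (\<lambda>j::nat. \<xi> ^ j) = unitU m"
    and "gcd s (2 ^ m + 1) = 1"
    and "a \<noteq> 0" and "abar \<in> subF m" and "k \<le> 2 ^ m" and "a = abar * \<xi> ^ k"
  defines "f \<equiv> (\<lambda>x::'a. if x = 0 then 0 else
       (\<Sum>i = 1..(2 ^ m + 1) div 3 - 1.
          tr n (a * x powi ((3 * int i + s) * (2 ^ m - 1)))))"
  shows "(bent n f \<longleftrightarrow>
           kloost m abar = 3 - (\<Sum>j\<le>2. chi (tr n (a * \<xi> ^ (j * ((2 ^ m + 1) div 3))))))
       \<and> (bent n f \<longrightarrow>
           kloost m abar =
             (if tr n a = 0 \<and> tr n (a * \<xi> ^ ((2 ^ m + 1) div 3)) = 0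
                 \<and> tr n (a * \<xi> ^ (2 * ((2 ^ m + 1) div 3))) = 0
              then 0 else 4))"
proof -
  interpret niho_setting m "TYPE('a)" a abar \<xi> s k
    by unfold_locales (use assms in auto)
  have "f = (\<lambda>x. if x = 0 then 0 else g (x^(q-1)))"
    unfolding f_def \<open>n = 2 * m\<close> using f_eq_g by blast
  thus ?thesis
    using bent_iff_kloost kloost_values unfolding \<open>n = 2 * m\<close> cube_trace_sum_def N_def by simp
qed

end
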